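(* Let $r\ge2$ and let $\tau$ be the substitution on $\{1,2,\dots,r\}$ defined by $\tau(i)=i(i+1)\cdots r\,1\,2\cdots(i-1)$ for $1\le i\le r$ (so $\tau(1)=12\cdots r$, $\tau(2)=23\cdots r1$, $\dots$, $\tau(r)=r12\cdots(r-1)$). For $1\le i\le r$ let $x^{(i)}$ be the fixed point of $\tau$ beginning with the letter $i$, and let $X$ be the one-sided subshift generated by $\tau$. Then each $x^{(i)}$ is distal in $X$: the only point of $X$ proximal to $x^{(i)}$ is $x^{(i)}$ itself. In particular each of the two fixed points of the Thue–Morse substitution ($r=2$) is distal.
   Context: $X$ is the shift-orbit closure in $\{1,\dots,r\}^{\mathbb N}$ of a fixed point of the (primitive) substitution $\tau$, with $T$ the shift map; it does not depend on the choice of fixed point. Two points $x,y\in X$ are proximal if for every $N>0$ there exists $n\in\mathbb N$ with $x_nx_{n+1}\cdots x_{n+N}=y_ny_{n+1}\cdots y_{n+N}$. A point $x\in X$ is distal if the only point of $X$ proximal to $x$ is $x$. *)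

theory Defs
  imports "HOL-Analysis.Analysis"
begin

definition tau :: "nat \<Rightarrow> nat \<Rightarrow> nat list" where
  "tau r i = [i..<r+1] @ [1..<i]"

text \<open>A sequence x is a fixed point of tau (every image tau(a) has length r):
  applying tau letter by letter to x and concatenating gives x again.\<close>
definition is_tau_fixed_point :: "nat \<Rightarrow> (nat \<Rightarrow> nat) \<Rightarrow> bool" where
  "is_tau_fixed_point r x \<longleftrightarrow> (\<forall>n j. j < r \<longrightarrow> x (r * n + j) = tau r (x n) ! j)"

definition shift :: "(nat \<Rightarrow> 'a) \<Rightarrow> (nat \<Rightarrow> 'a)" where
  "shift x = (\<lambda>n. x (Suc n))"

definition orbit_closure :: "(nat \<Rightarrow> nat) \<Rightarrow> (nat \<Rightarrow> nat) set" where
  "orbit_closure x = closure {(shift ^^ k) x | k. True}"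

definition proximal :: "(nat \<Rightarrow> 'a) \<Rightarrow> (nat \<Rightarrow> 'a) \<Rightarrow> bool" where
  "proximal x y \<longleftrightarrow> (\<forall>N>0. \<exists>n. \<forall>k\<le>N. x (n + k) = y (n + k))"

definition distal_in :: "(nat \<Rightarrow> 'a) set \<Rightarrow> (nat \<Rightarrow> 'a) \<Rightarrow> bool" where
  "distal_in X x \<longleftrightarrow> (\<forall>y\<in>X. proximal x y \<longrightarrow> y = x)"

end

theory Submission
  imports Defs "HOL-Number_Theory.Cong"
begin

text \<open>Reading positions in base r shows that the m-th letter of the fixed point x starting
  with i is i - 1 + s(m) reduced mod r (and shifted into {1..r}), where s is the base-r
  digit sum.
  The digit sums mod r along a sufficiently long window determine the starting position
  of the window mod r^k (recognizability).  A point y of X proximal to x agrees with x on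
  arbitrarily long windows, and each finite part of y is a window of x at some position a;
  recognizability forces a \<equiv> 0 mod r^k, so y is again of the form e + s(m) mod r.
  Agreeing with x at one position then forces y = x.\<close>

fun digit_sum :: "nat \<Rightarrow> nat \<Rightarrow> nat" where
  "digit_sum r m = (if r < 2 \<or> m = 0 then 0 else m mod r + digit_sum r (m div r))"

declare digit_sum.simps[simp del]

lemma digit_sum_0 [simp]: "digit_sum r 0 = 0"
  by (simp add: digit_sum.simps)

lemma digit_sum_mult_add:
  assumes "r \<ge> 2" "j < r"
  shows "digit_sum r (r * n + j) = digit_sum r n + j"
  using assms by (cases "r * n + j = 0") (auto simp: digit_sum.simps[of r "r * n + j"])

lemma digit_sum_mult:
  assumes "r \<ge> 2"
  shows "digit_sum r (r * n) = digit_sum r n"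
  using digit_sum_mult_add[OF assms, of 0 n] assms by simp

lemma digit_sum_eq_div_add_mod:
  assumes "r \<ge> 2"
  shows "digit_sum r m = digit_sum r (m div r) + m mod r"
  using digit_sum_mult_add[OF assms, of "m mod r" "m div r"] assms by simp

lemma digit_sum_Suc:
  assumes "r \<ge> 2" "m mod r \<noteq> r - 1"
  shows "digit_sum r (Suc m) = Suc (digit_sum r m)"
proof -
  have "m mod r + 1 < r"
    using assms mod_less_divisor[of r m] by linarith
  then have "digit_sum r (r * (m div r) + (m mod r + 1)) = digit_sum r (m div r) + (m mod r + 1)"
    by (rule digit_sum_mult_add[OF assms(1)])
  then show ?thesis
    using digit_sum_eq_div_add_mod[OF assms(1), of m] by simp
qed

lemma digit_sum_power_mult_add:
  assumes "r \<ge> 2" "m < r ^ k"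
  shows "digit_sum r (r ^ k * b + m) = digit_sum r b + digit_sum r m"
  using assms(2)
proof (induction k arbitrary: m)
  case 0
  then show ?case by simp
next
  case (Suc k)
  have "m div r < r ^ k"
    using Suc.prems by (simp add: less_mult_imp_div_less mult.commute)
  moreover have "r ^ Suc k * b + m = r * (r ^ k * b + m div r) + m mod r"
    by (simp add: algebra_simps)
  ultimately show ?case
    using Suc.IH assms(1) digit_sum_mult_add digit_sum_eq_div_add_mod[of r m] by simp
qed

lemma exists_add_cong:
  fixes u c m :: nat
  assumes "m > 0"
  shows "\<exists>j<m. [u + j = c] (mod m)"
proof (intro exI conjI)
  show "(m - u mod m + c) mod m < m" using assms by simp
  have "u mod m + (m - u mod m + c) = m + c"
    using mod_le_divisor[OF assms, of u] by simp
  then show "[u + (m - u mod m + c) mod m = c] (mod m)"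
    unfolding cong_def by (metis mod_add_eq mod_add_self1 mod_mod_trivial)
qed

text \<open>Going from w to w + 1 raises the digit sum by 1 unless w \<equiv> r - 1 (mod r); at
  w \<equiv> r - 1 (mod r^2) it lowers it by r - 2 instead.  So a window of length r^2 shows
  where the positions \<equiv> r - 1 (mod r) are.\<close>

lemma cong_of_digit_sum_window:
  assumes r: "r \<ge> 2" and N: "r ^ 2 \<le> N"
    and window: "\<forall>j\<le>N. [digit_sum r (u + j) = digit_sum r (v + j)] (mod r)"
  shows "[u = v] (mod r)"
proof -
  obtain j where j: "j < r ^ 2" and uj: "[u + j = r - 1] (mod r ^ 2)"
    using exists_add_cong[of "r ^ 2" u "r - 1"] r by auto
  have "r - 1 < r ^ 2"
    using r by (simp add: power2_eq_square less_le_trans[of _ r])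
  then have w_mod: "(u + j) mod r ^ 2 = r - 1"
    using uj by (simp add: cong_def)
  define Q where "Q = (u + j) div r ^ 2"
  have w: "u + j = r * (r * Q) + (r - 1)"
    using w_mod unfolding Q_def by (metis div_mult_mod_eq mult.assoc mult.commute power2_eq_square)
  have ds_w: "digit_sum r (u + j) = digit_sum r Q + (r - 1)"
    using digit_sum_mult_add[OF r, of "r - 1" "r * Q"] digit_sum_mult[OF r] w r by simp
  have "Suc (u + j) = r * (r * Q + 1)"
    using w r by (simp add: algebra_simps)
  then have "digit_sum r (Suc (u + j)) = digit_sum r (r * Q + 1)"
    by (simp only: digit_sum_mult[OF r])
  also have "\<dots> = digit_sum r Q + 1"
    using digit_sum_mult_add[OF r, of 1 Q] r by simp
  finally have ds_Suc_w: "digit_sum r (Suc (u + j)) = digit_sum r Q + 1" .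
  have "(v + j) mod r = r - 1"
  proof (rule ccontr)
    assume "(v + j) mod r \<noteq> r - 1"
    then have ds_Suc_z: "digit_sum r (Suc (v + j)) = Suc (digit_sum r (v + j))"
      by (rule digit_sum_Suc[OF r])
    have "[digit_sum r Q + (r - 1) = digit_sum r (v + j)] (mod r)"
      using window[rule_format, of j] j N ds_w by simp
    moreover have "[digit_sum r Q + 1 = digit_sum r (v + j) + 1] (mod r)"
      using window[rule_format, of "Suc j"] j N ds_Suc_w ds_Suc_z by simp
    ultimately have "[digit_sum r Q + (r - 1) = digit_sum r Q + 0] (mod r)"
      by (metis cong_add_rcancel_nat cong_sym cong_trans add_0_right)
    then have "[r - 1 = 0] (mod r)"
      by (simp only: cong_add_lcancel_nat)
    then show False
      using r by (simp add: cong_def)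
  qed
  moreover have "(u + j) mod r = r - 1"
    using mod_mod_cancel[of r "r ^ 2" "u + j"] w_mod r by simp
  ultimately have "[u + j = v + j] (mod r)"
    by (simp add: cong_def)
  then show ?thesis
    by (simp only: cong_add_rcancel_nat)
qed

lemma digit_sum_window_determines_residue:
  assumes r: "r \<ge> 2"
  shows "\<exists>N. \<forall>u v. (\<forall>j\<le>N. [digit_sum r (u + j) = digit_sum r (v + j)] (mod r))
           \<longrightarrow> [u = v] (mod r ^ k)"
proof (induction k)
  case 0
  show ?case by simp
next
  case (Suc k)
  then obtain N where IH: "\<And>u v. \<forall>j\<le>N. [digit_sum r (u + j) = digit_sum r (v + j)] (mod r)
                             \<Longrightarrow> [u = v] (mod r ^ k)"
    by blast
  show ?case
  proof (intro exI[of _ "r ^ 2 + r * N + r"] allI impI)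
    fix u v
    assume window: "\<forall>j\<le>r ^ 2 + r * N + r. [digit_sum r (u + j) = digit_sum r (v + j)] (mod r)"
    have uv: "[u = v] (mod r)"
      by (rule cong_of_digit_sum_window[OF r _ window]) simp
    obtain q where q: "q < r" and uq: "[u + q = 0] (mod r)"
      using exists_add_cong[of r u 0] r by auto
    have vq: "[v + q = 0] (mod r)"
      using uq uv by (metis cong_add_rcancel_nat cong_sym cong_trans)
    obtain u' where u': "u + q = r * u'"
      using uq by (auto simp: cong_0_iff)
    obtain v' where v': "v + q = r * v'"
      using vq by (auto simp: cong_0_iff)
    have "[u' = v'] (mod r ^ k)"
    proof (rule IH, intro allI impI)
      fix m assume "m \<le> N"
      then have "q + r * m \<le> r ^ 2 + r * N + r"
        using q mult_le_mono2[of m N r] by linarith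
      then have "[digit_sum r (u + (q + r * m)) = digit_sum r (v + (q + r * m))] (mod r)"
        using window by blast
      moreover have "u + (q + r * m) = r * (u' + m)" and "v + (q + r * m) = r * (v' + m)"
        using u' v' by (simp_all add: algebra_simps)
      ultimately show "[digit_sum r (u' + m) = digit_sum r (v' + m)] (mod r)"
        by (simp add: digit_sum_mult[OF r])
    qed
    then have "[r * u' = r * v'] (mod r ^ Suc k)"
      by (simp add: cong_def mod_mult_mult1)
    then have "[u + q = v + q] (mod r ^ Suc k)"
      using u' v' by simp
    then show "[u = v] (mod r ^ Suc k)"
      by (simp only: cong_add_rcancel_nat)
  qed
qed

definition digit_sum_seq :: "nat \<Rightarrow> nat \<Rightarrow> nat \<Rightarrow> nat" where
  "digit_sum_seq r c m = (c + digit_sum r m) mod r + 1"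

lemma digit_sum_seq_eq_iff:
  "digit_sum_seq r c p = digit_sum_seq r c' q \<longleftrightarrow> [c + digit_sum r p = c' + digit_sum r q] (mod r)"
  by (simp add: digit_sum_seq_def cong_def)

lemma digit_sum_seq_eqI:
  assumes "digit_sum_seq r c n = digit_sum_seq r c' n"
  shows "digit_sum_seq r c = digit_sum_seq r c'"
proof
  fix m
  have "[c = c'] (mod r)"
    using assms by (simp add: digit_sum_seq_eq_iff cong_add_rcancel_nat)
  then show "digit_sum_seq r c m = digit_sum_seq r c' m"
    by (simp add: digit_sum_seq_eq_iff cong_add_rcancel_nat)
qed

lemma digit_sum_seq_window_determines_residue:
  assumes "r \<ge> 2"
  shows "\<exists>N. \<forall>u v. (\<forall>j\<le>N. digit_sum_seq r c (u + j) = digit_sum_seq r c (v + j))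
           \<longrightarrow> [u = v] (mod r ^ k)"
  using digit_sum_window_determines_residue[OF assms, of k]
  by (simp add: digit_sum_seq_eq_iff cong_add_lcancel_nat)

lemma tau_nth:
  assumes "1 \<le> a" "a \<le> r" "j < r"
  shows "tau r a ! j = (a - 1 + j) mod r + 1"
proof (cases "j < r + 1 - a")
  case True
  then have "(a - 1 + j) mod r = a - 1 + j"
    using assms by simp
  then show ?thesis
    using assms True by (simp add: tau_def nth_append; arith)
next
  case False
  then have "(a - 1 + j) mod r = a - 1 + j - r"
    using assms by (simp add: mod_if)
  then show ?thesis
    using assms False by (simp add: tau_def nth_append; arith)
qed

lemma tau_fixed_point_eq_digit_sum_seq:
  assumes r: "r \<ge> 2" and "1 \<le> x 0" "x 0 \<le> r" and fixed: "is_tau_fixed_point r x"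
  shows "x = digit_sum_seq r (x 0 - 1)"
proof
  fix m
  show "x m = digit_sum_seq r (x 0 - 1) m"
  proof (induction m rule: less_induct)
    case (less m)
    show ?case
    proof (cases "m = 0")
      case True
      then show ?thesis
        using assms by (simp add: digit_sum_seq_def)
    next
      case False
      let ?n = "m div r" and ?j = "m mod r"
      have j: "?j < r" and n: "?n < m"
        using False r by simp_all
      have "x m = tau r (x ?n) ! ?j"
        using fixed j div_mult_mod_eq[of m r] unfolding is_tau_fixed_point_def
        by (metis mult.commute)
      also have "\<dots> = (x ?n - 1 + ?j) mod r + 1"
        using less.IH[OF n] r j by (intro tau_nth) (simp_all add: digit_sum_seq_def Suc_le_eq)
      also have "\<dots> = digit_sum_seq r (x 0 - 1) m"
        using less.IH[OF n] digit_sum_eq_div_add_mod[OF r, of m]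
        by (simp add: digit_sum_seq_def mod_add_left_eq add.assoc)
      finally show ?thesis .
    qed
  qed
qed

lemma funpow_shift: "(shift ^^ k) x = (\<lambda>n. x (k + n))"
  by (induction k) (auto simp: shift_def)

lemma self_in_orbit_closure: "x \<in> orbit_closure x"
proof -
  have "x \<in> {(shift ^^ k) x | k. True}"
    by (intro CollectI exI[of _ 0]) simp
  then show ?thesis
    unfolding orbit_closure_def by (rule closure_subset[THEN subsetD])
qed

lemma orbit_closure_window:
  assumes "y \<in> orbit_closure x"
  shows "\<exists>a. \<forall>m\<le>L. y m = x (a + m)"
proof -
  define U where "U = {f :: nat \<Rightarrow> nat. \<forall>i\<in>{..L}. f i \<in> {y i}}"
  have "open U"
    unfolding U_def by (rule product_topology_basis') (auto simp: open_discrete)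
  moreover have "y \<in> U"
    unfolding U_def by simp
  ultimately have "U \<inter> {(shift ^^ k) x | k. True} \<noteq> {}"
    using assms open_Int_closure_eq_empty[of U "{(shift ^^ k) x | k. True}"]
    unfolding orbit_closure_def by blast
  then obtain k where "\<forall>m\<le>L. x (k + m) = y m"
    unfolding U_def funpow_shift by auto
  then show ?thesis
    by (intro exI[of _ k]) simp
qed

lemma proximal_orbit_closure_aligned:
  assumes r: "r \<ge> 2" and y: "y \<in> orbit_closure (digit_sum_seq r c)"
    and prox: "proximal (digit_sum_seq r c) y"
  shows "\<exists>a. r ^ k dvd a \<and> (\<forall>t\<le>k. y t = digit_sum_seq r c (a + t))"
proof -
  let ?x = "digit_sum_seq r c"
  obtain N where recognize: "\<And>u v. \<forall>j\<le>N. ?x (u + j) = ?x (v + j) \<Longrightarrow> [u = v] (mod r ^ k)"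
    using digit_sum_seq_window_determines_residue[OF r] by blast
  obtain n where n: "\<forall>j\<le>N + 1. ?x (n + j) = y (n + j)"
    using prox unfolding proximal_def by auto
  obtain a where a: "\<forall>t\<le>n + N + k. y t = ?x (a + t)"
    using orbit_closure_window[OF y] by blast
  have "\<forall>j\<le>N. ?x (n + j) = ?x (a + n + j)"
    using n a by (simp add: add.assoc)
  then have "[0 + n = a + n] (mod r ^ k)"
    using recognize by simp
  then have "[a = 0] (mod r ^ k)"
    by (simp only: cong_add_rcancel_nat cong_sym_eq)
  then have "r ^ k dvd a"
    by (simp only: cong_0_iff)
  then show ?thesis
    using a by auto
qed

lemma proximal_orbit_closure_eq_digit_sum_seq:
  assumes r: "r \<ge> 2" and y: "y \<in> orbit_closure (digit_sum_seq r c)"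
    and prox: "proximal (digit_sum_seq r c) y"
  shows "y = digit_sum_seq r (y 0 - 1)"
proof
  fix m
  obtain a where "r ^ m dvd a" and a: "\<forall>t\<le>m. y t = digit_sum_seq r c (a + t)"
    using proximal_orbit_closure_aligned[OF assms] by blast
  then obtain b where b: "a = r ^ m * b"
    by blast
  have "m < r ^ m"
    using less_exp[of m] power_mono[of 2 r m] r by linarith
  then have "digit_sum r (a + m) = digit_sum r b + digit_sum r m"
    using digit_sum_power_mult_add[OF r] b by simp
  moreover have "digit_sum r a = digit_sum r b"
    using digit_sum_power_mult_add[OF r, of 0 m b] b r by simp
  ultimately show "y m = digit_sum_seq r (y 0 - 1) m"
    using a[rule_format, of 0] a[rule_format, of m]
    by (simp add: digit_sum_seq_def mod_add_left_eq add.assoc)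
qed

theorem mainTheorem17:
  fixes r i :: nat and x :: "nat \<Rightarrow> nat"
  assumes "r \<ge> 2" and "1 \<le> i" and "i \<le> r"
    and "is_tau_fixed_point r x" and "x 0 = i"
  shows "x \<in> orbit_closure x \<and> distal_in (orbit_closure x) x"
proof
  show "x \<in> orbit_closure x"
    by (rule self_in_orbit_closure)
  have x: "x = digit_sum_seq r (i - 1)"
    using tau_fixed_point_eq_digit_sum_seq[of r x] assms by simp
  show "distal_in (orbit_closure x) x"
    unfolding distal_in_def
  proof (intro ballI impI)
    fix y assume "y \<in> orbit_closure x" and prox: "proximal x y"
    then have y: "y = digit_sum_seq r (y 0 - 1)"
      using proximal_orbit_closure_eq_digit_sum_seq[OF \<open>r \<ge> 2\<close>] x by simp
    obtain n where "x n = y n"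
      using prox unfolding proximal_def by fastforce
    then show "y = x"
      using digit_sum_seq_eqI[of r "i - 1" n "y 0 - 1"] x y by metis
  qed
qed

end
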